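(* Let $P\in\mathbb{F}_p[x,y]$ with $\deg_x P\leqslant m$ and $\deg_y P\leqslant n$. Define polynomials $q_k,r_k\in\mathbb{F}_p[x,y]$, $k\geqslant 1$, by $$q_1=-\frac{\partial P}{\partial x},\qquad r_1=\frac{\partial P}{\partial y},$$ $$q_{k+1}=\frac{\partial q_k}{\partial x}\Big(\frac{\partial P}{\partial y}\Big)^2-\frac{\partial q_k}{\partial y}\frac{\partial P}{\partial x}\frac{\partial P}{\partial y}-(2k-1)q_k\frac{\partial^2 P}{\partial x\partial y}\frac{\partial P}{\partial y}+(2k-1)q_k\frac{\partial^2 P}{\partial y^2}\frac{\partial P}{\partial x},$$ $$r_{k+1}=r_k\Big(\frac{\partial P}{\partial y}\Big)^2 .$$ Then for every $k\geqslant 1$: $$\deg_x q_k\leqslant (2k-1)m-k,\quad \deg_y q_k\leqslant (2k-1)n-k+1,\quad \deg_x r_k\leqslant (2k-1)m,\quad \deg_y r_k\leqslant (2k-1)(n-1).$$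
   Context: Partial derivatives are formal derivatives of polynomials. The degree of the zero polynomial (in either variable) is taken to be $-\infty$, so every degree bound holds for it. *)

theory Defs
  imports "HOL-Computational_Algebra.Polynomial" "Berlekamp_Zassenhaus.Finite_Field"
begin

text \<open>Bivariate polynomials in F_p[x,y] are encoded as 'a poly poly:
  the outer variable is y, the coefficients are polynomials in x.
  So coeff (coeff P j) i is the coefficient of x^i y^j.\<close>

definition pdx :: "'a::idom poly poly \<Rightarrow> 'a poly poly" where
  "pdx P = map_poly pderiv P"

definition pdy :: "'a::idom poly poly \<Rightarrow> 'a poly poly" where
  "pdy P = pderiv P"

text \<open>Degree bounds with the convention deg 0 = -infinity.\<close>
definition degx_le :: "'a::zero poly poly \<Rightarrow> int \<Rightarrow> bool" where
  "degx_le P d \<longleftrightarrow> (\<forall>i j. coeff (coeff P j) i \<noteq> 0 \<longrightarrow> int i \<le> d)"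

definition degy_le :: "'a::zero poly poly \<Rightarrow> int \<Rightarrow> bool" where
  "degy_le P d \<longleftrightarrow> (\<forall>j. coeff P j \<noteq> 0 \<longrightarrow> int j \<le> d)"

text \<open>q P k and r P k for k \<ge> 1 (the value at k = 0 is an unused dummy).\<close>
fun qs :: "'a::idom poly poly \<Rightarrow> nat \<Rightarrow> 'a poly poly" where
  "qs P 0 = 0"
| "qs P (Suc 0) = - pdx P"
| "qs P (Suc (Suc k)) =
     (let q = qs P (Suc k); c = of_nat (2 * Suc k - 1) in
      pdx q * (pdy P)^2 - pdy q * pdx P * pdy P
      - c * q * pdy (pdx P) * pdy P + c * q * pdy (pdy P) * pdx P)"

fun rs :: "'a::idom poly poly \<Rightarrow> nat \<Rightarrow> 'a poly poly" where
  "rs P 0 = 0"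
| "rs P (Suc 0) = pdy P"
| "rs P (Suc (Suc k)) = rs P (Suc k) * (pdy P)^2"

end

theory Submission
  imports Defs
begin

text \<open>Every term of the recursion for \<open>q\<^sub>k\<close> is a product of \<open>q\<^sub>k\<close> or one of its first
  derivatives with two first or second derivatives of \<open>P\<close>, so passing from \<open>q\<^sub>k\<close> to \<open>q\<^sub>k\<^sub>+\<^sub>1\<close>
  raises the \<open>x\<close>-degree by at most \<open>2m - 1\<close> and the \<open>y\<close>-degree by at most \<open>2n - 2\<close>.
  Since \<open>r\<^sub>k = (\<partial>P/\<partial>y)\<^bsup>2k-1\<^esup>\<close>, its bounds are those of a power.\<close>

lemma degx_le_mono: "degx_le A a \<Longrightarrow> a \<le> b \<Longrightarrow> degx_le A b"
  unfolding degx_le_def by force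

lemma degy_le_mono: "degy_le A a \<Longrightarrow> a \<le> b \<Longrightarrow> degy_le A b"
  unfolding degy_le_def by force

lemma degx_le_uminus: "degx_le A a \<Longrightarrow> degx_le (- A) a"
  unfolding degx_le_def by simp

lemma degy_le_uminus: "degy_le A a \<Longrightarrow> degy_le (- A) a"
  unfolding degy_le_def by simp

lemma degx_le_add:
  fixes A B :: "'a::comm_monoid_add poly poly"
  assumes "degx_le A a" "degx_le B a"
  shows "degx_le (A + B) a"
  unfolding degx_le_def
proof (intro allI impI)
  fix i j
  assume "coeff (coeff (A + B) j) i \<noteq> 0"
  then have "coeff (coeff A j) i \<noteq> 0 \<or> coeff (coeff B j) i \<noteq> 0" by auto
  with assms show "int i \<le> a" unfolding degx_le_def by auto
qed

lemma degy_le_add: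
  fixes A B :: "'a::comm_monoid_add poly poly"
  assumes "degy_le A a" "degy_le B a"
  shows "degy_le (A + B) a"
  unfolding degy_le_def
proof (intro allI impI)
  fix j
  assume "coeff (A + B) j \<noteq> 0"
  then have "coeff A j \<noteq> 0 \<or> coeff B j \<noteq> 0" by auto
  with assms show "int j \<le> a" unfolding degy_le_def by auto
qed

lemma degx_le_diff:
  fixes A B :: "'a::ab_group_add poly poly"
  assumes "degx_le A a" "degx_le B a"
  shows "degx_le (A - B) a"
  using degx_le_add[OF assms(1) degx_le_uminus[OF assms(2)]] by simp

lemma degy_le_diff:
  fixes A B :: "'a::ab_group_add poly poly"
  assumes "degy_le A a" "degy_le B a"
  shows "degy_le (A - B) a"
  using degy_le_add[OF assms(1) degy_le_uminus[OF assms(2)]] by simp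

lemma degx_le_mult:
  fixes A B :: "'a::comm_semiring_0 poly poly"
  assumes "degx_le A a" "degx_le B b"
  shows "degx_le (A * B) (a + b)"
  unfolding degx_le_def
proof (intro allI impI)
  fix i j
  assume "coeff (coeff (A * B) j) i \<noteq> 0"
  then obtain l where "coeff (coeff A l * coeff B (j - l)) i \<noteq> 0"
    unfolding coeff_mult[of A] coeff_sum by (rule sum.not_neutral_contains_not_neutral)
  then obtain t where "t \<in> {..i}" and "coeff (coeff A l) t * coeff (coeff B (j - l)) (i - t) \<noteq> 0"
    unfolding coeff_mult by (rule sum.not_neutral_contains_not_neutral)
  then have "t \<le> i" "coeff (coeff A l) t \<noteq> 0" "coeff (coeff B (j - l)) (i - t) \<noteq> 0"
    by auto
  moreover from this(2,3) have "int t \<le> a" "int (i - t) \<le> b"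
    using assms unfolding degx_le_def by blast+
  ultimately show "int i \<le> a + b" by linarith
qed

lemma degy_le_mult:
  fixes A B :: "'a::comm_semiring_0 poly poly"
  assumes "degy_le A a" "degy_le B b"
  shows "degy_le (A * B) (a + b)"
  unfolding degy_le_def
proof (intro allI impI)
  fix j
  assume "coeff (A * B) j \<noteq> 0"
  then obtain l where "l \<in> {..j}" and "coeff A l * coeff B (j - l) \<noteq> 0"
    unfolding coeff_mult by (rule sum.not_neutral_contains_not_neutral)
  then have "l \<le> j" "coeff A l \<noteq> 0" "coeff B (j - l) \<noteq> 0"
    by auto
  moreover from this(2,3) have "int l \<le> a" "int (j - l) \<le> b"
    using assms unfolding degy_le_def by blast+
  ultimately show "int j \<le> a + b" by linarith
qed

lemma degx_le_of_nat: "degx_le (of_nat c :: 'a::comm_semiring_1 poly poly) 0"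
  unfolding degx_le_def of_nat_poly by (simp add: coeff_pCons')

lemma degy_le_of_nat: "degy_le (of_nat c :: 'a::comm_semiring_1 poly poly) 0"
  unfolding degy_le_def of_nat_poly by (simp add: coeff_pCons')

lemma degx_le_of_nat_mult: "degx_le A a \<Longrightarrow> degx_le (of_nat c * A) a"
  using degx_le_mult[OF degx_le_of_nat] by fastforce

lemma degx_le_power:
  fixes A :: "'a::comm_semiring_1 poly poly"
  assumes "degx_le A a"
  shows "degx_le (A ^ e) (int e * a)"
proof (induction e)
  case 0
  show ?case using degx_le_of_nat[of 1] by simp
next
  case (Suc e)
  from degx_le_mult[OF assms Suc] show ?case by (simp add: algebra_simps)
qed

lemma degy_le_of_nat_mult: "degy_le A a \<Longrightarrow> degy_le (of_nat c * A) a"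
  using degy_le_mult[OF degy_le_of_nat] by fastforce

lemma degy_le_power:
  fixes A :: "'a::comm_semiring_1 poly poly"
  assumes "degy_le A a"
  shows "degy_le (A ^ e) (int e * a)"
proof (induction e)
  case 0
  show ?case using degy_le_of_nat[of 1] by simp
next
  case (Suc e)
  from degy_le_mult[OF assms Suc] show ?case by (simp add: algebra_simps)
qed

lemma degx_le_pdx: "degx_le A a \<Longrightarrow> degx_le (pdx A) (a - 1)"
  unfolding degx_le_def pdx_def by (auto simp: coeff_map_poly coeff_pderiv)

lemma degy_le_pdx: "degy_le A a \<Longrightarrow> degy_le (pdx A) a"
  unfolding degy_le_def pdx_def by (metis coeff_map_poly pderiv_0)

lemma degx_le_pdy: "degx_le A a \<Longrightarrow> degx_le (pdy A) a"
  unfolding degx_le_def pdy_def by (auto simp: coeff_pderiv of_nat_poly)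

lemma degy_le_pdy: "degy_le A a \<Longrightarrow> degy_le (pdy A) (a - 1)"
  unfolding degy_le_def pdy_def by (auto simp: coeff_pderiv)

lemma rs_Suc_eq_power: "rs P (Suc k) = pdy P ^ (2 * k + 1)"
proof (induction k)
  case (Suc k)
  then show ?case by (simp del: power_Suc add: power_add[symmetric])
qed simp

lemma qs_Suc_Suc_eq:
  "qs P (Suc (Suc k)) =
     pdx (qs P (Suc k)) * (pdy P * pdy P) - pdy (qs P (Suc k)) * pdx P * pdy P
     - of_nat (2 * k + 1) * qs P (Suc k) * pdy (pdx P) * pdy P
     + of_nat (2 * k + 1) * qs P (Suc k) * pdy (pdy P) * pdx P"
  by (simp add: Let_def power2_eq_square)

lemma degx_le_qs_Suc_Suc:
  fixes P :: "'a::idom poly poly"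
  assumes P: "degx_le P m" and q: "degx_le (qs P (Suc k)) a"
  shows "degx_le (qs P (Suc (Suc k))) (a + 2 * m - 1)"
proof -
  have Px: "degx_le (pdx P) (m - 1)" and Py: "degx_le (pdy P) m"
    using P by (rule degx_le_pdx degx_le_pdy)+
  have pdx_q: "degx_le (pdx (qs P (Suc k)) * (pdy P * pdy P)) ((a - 1) + (m + m))"
    by (rule degx_le_mult[OF degx_le_pdx[OF q] degx_le_mult[OF Py Py]])
  have pdy_q: "degx_le (pdy (qs P (Suc k)) * pdx P * pdy P) ((a + (m - 1)) + m)"
    by (rule degx_le_mult[OF degx_le_mult[OF degx_le_pdy[OF q] Px] Py])
  have q_pdxy: "degx_le (of_nat (2 * k + 1) * qs P (Suc k) * pdy (pdx P) * pdy P)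
      ((a + (m - 1)) + m)"
    by (rule degx_le_mult[OF degx_le_mult[OF degx_le_of_nat_mult[OF q] degx_le_pdy[OF Px]] Py])
  have q_pdyy: "degx_le (of_nat (2 * k + 1) * qs P (Suc k) * pdy (pdy P) * pdx P)
      ((a + m) + (m - 1))"
    by (rule degx_le_mult[OF degx_le_mult[OF degx_le_of_nat_mult[OF q] degx_le_pdy[OF Py]] Px])
  show ?thesis
    unfolding qs_Suc_Suc_eq
    by (intro degx_le_add degx_le_diff degx_le_mono[OF pdx_q] degx_le_mono[OF pdy_q]
        degx_le_mono[OF q_pdxy] degx_le_mono[OF q_pdyy]) linarith+
qed

lemma degy_le_qs_Suc_Suc:
  fixes P :: "'a::idom poly poly"
  assumes P: "degy_le P n" and q: "degy_le (qs P (Suc k)) b"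
  shows "degy_le (qs P (Suc (Suc k))) (b + 2 * n - 2)"
proof -
  have Px: "degy_le (pdx P) n" and Py: "degy_le (pdy P) (n - 1)"
    using P by (rule degy_le_pdx degy_le_pdy)+
  have pdx_q: "degy_le (pdx (qs P (Suc k)) * (pdy P * pdy P)) (b + ((n - 1) + (n - 1)))"
    by (rule degy_le_mult[OF degy_le_pdx[OF q] degy_le_mult[OF Py Py]])
  have pdy_q: "degy_le (pdy (qs P (Suc k)) * pdx P * pdy P) (((b - 1) + n) + (n - 1))"
    by (rule degy_le_mult[OF degy_le_mult[OF degy_le_pdy[OF q] Px] Py])
  have q_pdxy: "degy_le (of_nat (2 * k + 1) * qs P (Suc k) * pdy (pdx P) * pdy P)
      ((b + (n - 1)) + (n - 1))"
    by (rule degy_le_mult[OF degy_le_mult[OF degy_le_of_nat_mult[OF q] degy_le_pdy[OF Px]] Py])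
  have q_pdyy: "degy_le (of_nat (2 * k + 1) * qs P (Suc k) * pdy (pdy P) * pdx P)
      ((b + (n - 1 - 1)) + n)"
    by (rule degy_le_mult[OF degy_le_mult[OF degy_le_of_nat_mult[OF q] degy_le_pdy[OF Py]] Px])
  show ?thesis
    unfolding qs_Suc_Suc_eq
    by (intro degy_le_add degy_le_diff degy_le_mono[OF pdx_q] degy_le_mono[OF pdy_q]
        degy_le_mono[OF q_pdxy] degy_le_mono[OF q_pdyy]) linarith+
qed

lemma degx_le_qs_Suc:
  fixes P :: "'a::idom poly poly"
  assumes "degx_le P m"
  shows "degx_le (qs P (Suc k)) ((2 * int k + 1) * m - int k - 1)"
proof (induction k)
  case 0
  show ?case using degx_le_uminus[OF degx_le_pdx[OF assms]] by simp
next
  case (Suc k)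
  from degx_le_qs_Suc_Suc[OF assms Suc] show ?case
    by (rule degx_le_mono) (simp add: algebra_simps)
qed

lemma degy_le_qs_Suc:
  fixes P :: "'a::idom poly poly"
  assumes "degy_le P n"
  shows "degy_le (qs P (Suc k)) ((2 * int k + 1) * n - int k)"
proof (induction k)
  case 0
  show ?case using degy_le_uminus[OF degy_le_pdx[OF assms]] by simp
next
  case (Suc k)
  from degy_le_qs_Suc_Suc[OF assms Suc] show ?case
    by (rule degy_le_mono) (simp add: algebra_simps)
qed

theorem lemma4:
  fixes P :: "'p::prime_card mod_ring poly poly" and m n k :: nat
  assumes "degx_le P (int m)" and "degy_le P (int n)" and "k \<ge> 1"
  shows "degx_le (qs P k) ((2 * int k - 1) * int m - int k)
       \<and> degy_le (qs P k) ((2 * int k - 1) * int n - int k + 1)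
       \<and> degx_le (rs P k) ((2 * int k - 1) * int m)
       \<and> degy_le (rs P k) ((2 * int k - 1) * (int n - 1))"
proof -
  obtain j where k: "k = Suc j" using \<open>k \<ge> 1\<close> by (cases k) auto
  have "degx_le (rs P (Suc j)) (int (2 * j + 1) * int m)"
    unfolding rs_Suc_eq_power by (intro degx_le_power degx_le_pdy assms(1))
  moreover have "degy_le (rs P (Suc j)) (int (2 * j + 1) * (int n - 1))"
    unfolding rs_Suc_eq_power by (intro degy_le_power degy_le_pdy assms(2))
  ultimately show ?thesis
    using degx_le_qs_Suc[OF assms(1), of j] degy_le_qs_Suc[OF assms(2), of j]
    by (simp add: k algebra_simps)
qed

end
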